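(* Let $F=\begin{pmatrix}0&-1&0\\-1&4&-1\\0&-1&0\end{pmatrix}$ (edge detect B filter). Then for all $m,n\in\mathbb{N}$, it is not the case that the equation $F*X=B$ with the reflexive boundary condition, for unknown $X\in\mathbb{R}^{m\times n}$, has a unique solution for every $B\in\mathbb{R}^{m\times n}$.
   Context: For $F=[f_{ij}]\in\mathbb{R}^{3\times3}$ and $X=[x_{ij}]\in\mathbb{R}^{m\times n}$, the convolution $F*X\in\mathbb{R}^{m\times n}$ is defined by $[F*X]_{ij}=\sum_{l_1=1}^3\sum_{l_2=1}^3 f_{l_1l_2}\,x_{i-l_1+2,\,j-l_2+2}$ for $1\le i\le m$, $1\le j\le n$, where the reflexive boundary condition sets $x_{0j}=x_{1j}$, $x_{m+1,j}=x_{mj}$, $x_{i0}=x_{i1}$, $x_{i,n+1}=x_{in}$ (for all indices $i\in\{0,\dots,m+1\}$, $j\in\{0,\dots,n+1\}$, so corners are also determined, e.g. $x_{00}=x_{11}$). *)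

theory Defs
  imports Main "HOL.Real"
begin

text \<open>An m x n real matrix is represented as a function nat => nat => real
  whose entries are indexed by 1..m and 1..n and which vanishes elsewhere.\<close>
definition mat_space :: "nat \<Rightarrow> nat \<Rightarrow> (nat \<Rightarrow> nat \<Rightarrow> real) set" where
  "mat_space m n = {X. \<forall>i j. \<not> (1 \<le> i \<and> i \<le> m \<and> 1 \<le> j \<and> j \<le> n) \<longrightarrow> X i j = 0}"

text \<open>Reflexive boundary extension: x_{0j} = x_{1j}, x_{m+1,j} = x_{mj}, etc.
  (for indices 0..m+1 and 0..n+1, clamping to the range).\<close>
definition refl_ext :: "nat \<Rightarrow> nat \<Rightarrow> (nat \<Rightarrow> nat \<Rightarrow> real) \<Rightarrow> nat \<Rightarrow> nat \<Rightarrow> real" where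
  "refl_ext m n X i j = X (min (max i 1) m) (min (max j 1) n)"

definition conv_refl :: "(nat \<Rightarrow> nat \<Rightarrow> real) \<Rightarrow> nat \<Rightarrow> nat \<Rightarrow> (nat \<Rightarrow> nat \<Rightarrow> real) \<Rightarrow> nat \<Rightarrow> nat \<Rightarrow> real" where
  "conv_refl f m n X i j =
     (if 1 \<le> i \<and> i \<le> m \<and> 1 \<le> j \<and> j \<le> n then
        (\<Sum>l1\<in>{1..3}. \<Sum>l2\<in>{1..3}. f l1 l2 * refl_ext m n X (i + 2 - l1) (j + 2 - l2))
      else 0)"

definition filter_of :: "real list list \<Rightarrow> nat \<Rightarrow> nat \<Rightarrow> real" where
  "filter_of F l1 l2 = F ! (l1 - 1) ! (l2 - 1)"

definition edge_detect_B :: "nat \<Rightarrow> nat \<Rightarrow> real" where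
  "edge_detect_B = filter_of [[0, -1, 0], [-1, 4, -1], [0, -1, 0]]"

end

theory Submission
  imports Defs
begin

(* The edge detect B filter has entry sum 0, and under the reflexive boundary condition a
   constant image is convolved to the entry sum times itself.  So the constant image 1 and
   the zero image are two solutions of F * X = 0. *)

definition ones_mat :: "nat \<Rightarrow> nat \<Rightarrow> nat \<Rightarrow> nat \<Rightarrow> real" where
  "ones_mat m n i j = (if 1 \<le> i \<and> i \<le> m \<and> 1 \<le> j \<and> j \<le> n then 1 else 0)"

definition filter_sum :: "(nat \<Rightarrow> nat \<Rightarrow> real) \<Rightarrow> real" where
  "filter_sum f = (\<Sum>l1\<in>{1..3}. \<Sum>l2\<in>{1..3}. f l1 l2)"

lemma ones_mat_in_mat_space: "ones_mat m n \<in> mat_space m n"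
  by (simp add: mat_space_def ones_mat_def)

lemma ones_mat_nonzero:
  assumes "1 \<le> m" and "1 \<le> n"
  shows "ones_mat m n \<noteq> (\<lambda>i j. 0)"
proof
  assume "ones_mat m n = (\<lambda>i j. 0)"
  then have "ones_mat m n 1 1 = 0" by simp
  with assms show False by (simp add: ones_mat_def)
qed

lemma refl_ext_ones_mat:
  assumes "1 \<le> m" and "1 \<le> n"
  shows "refl_ext m n (ones_mat m n) i j = 1"
  using assms by (simp add: refl_ext_def ones_mat_def)

lemma conv_refl_ones_mat:
  assumes "1 \<le> m" and "1 \<le> n"
  shows "conv_refl f m n (ones_mat m n) = (\<lambda>i j. filter_sum f * ones_mat m n i j)"
  by (intro ext) (simp add: conv_refl_def refl_ext_ones_mat[OF assms] filter_sum_def ones_mat_def)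

lemma conv_refl_zero: "conv_refl f m n (\<lambda>i j. 0) = (\<lambda>i j. 0)"
  by (intro ext) (simp add: conv_refl_def refl_ext_def)

lemma conv_refl_not_uniquely_solvable:
  assumes "1 \<le> m" and "1 \<le> n" and "filter_sum f = 0"
  shows "\<not> (\<forall>B \<in> mat_space m n. \<exists>!X. X \<in> mat_space m n \<and> conv_refl f m n X = B)"
proof
  let ?zero = "\<lambda>i j. 0 :: real"
  have zero_in_space: "?zero \<in> mat_space m n" by (simp add: mat_space_def)
  assume "\<forall>B \<in> mat_space m n. \<exists>!X. X \<in> mat_space m n \<and> conv_refl f m n X = B"
  then have "\<exists>!X. X \<in> mat_space m n \<and> conv_refl f m n X = ?zero"
    using zero_in_space by blast
  moreover have "conv_refl f m n (ones_mat m n) = ?zero"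
    using assms(3) by (simp add: conv_refl_ones_mat[OF assms(1,2)])
  ultimately have "ones_mat m n = ?zero"
    using ones_mat_in_mat_space zero_in_space conv_refl_zero by (metis (no_types, lifting))
  with ones_mat_nonzero[OF assms(1,2)] show False ..
qed

lemma filter_sum_edge_detect_B: "filter_sum edge_detect_B = 0"
proof -
  have "{1..3::nat} = {1, 2, 3}" by auto
  then show ?thesis by (simp add: filter_sum_def edge_detect_B_def filter_of_def)
qed

theorem corollary12:
  fixes m n :: nat
  assumes "1 \<le> m" and "1 \<le> n"
  shows "\<not> (\<forall>B \<in> mat_space m n. \<exists>!X. X \<in> mat_space m n \<and> conv_refl edge_detect_B m n X = B)"
  using conv_refl_not_uniquely_solvable[OF assms filter_sum_edge_detect_B] .

end
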